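(* Let $V=\{1,\dots,p\}$ and let $F:2^V\to\mathbb{R}$ be submodular, nondecreasing, with $F(\varnothing)=0$ and $F(\{k\})>0$ for all $k\in V$. Let $\Omega(w)=f(|w|)$ where $f$ is the Lovász extension of $F$. For $J\subset V$, let $F_J:2^J\to\mathbb{R}$, $F_J(A)=F(A)$ (restriction), and $F^J:2^{J^c}\to\mathbb{R}$, $F^J(A)=F(A\cup J)-F(J)$ (contraction). Let $\Omega_J(u)=f_J(|u|)$ for $u\in\mathbb{R}^J$ and $\Omega^J(v)=f^J(|v|)$ for $v\in\mathbb{R}^{J^c}$, where $f_J,f^J$ are the Lovász extensions of $F_J,F^J$. Then: (i) for all $w\in\mathbb{R}^p$, $\Omega(w)\geqslant\Omega_J(w_J)+\Omega^J(w_{J^c})$; (ii) for all $w\in\mathbb{R}^p$, if $\min_{j\in J}|w_j|\geqslant\max_{j\in J^c}|w_j|$, then $\Omega(w)=\Omega_J(w_J)+\Omega^J(w_{J^c})$; (iii) $\Omega^J$ is a norm on $\mathbb{R}^{J^c}$ if and only if $J$ is a stable set.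
   Context: The Lovász extension of a set-function $G$ on a finite ground set $W$ is the function on $\mathbb{R}_+^W$ given, for $w$ with components ordered $w_{j_1}\geqslant\cdots\geqslant w_{j_m}\geqslant0$, by $\sum_{k=1}^m w_{j_k}[G(\{j_1,\dots,j_k\})-G(\{j_1,\dots,j_{k-1}\})]$. $|w|$ is the componentwise absolute value; $w_J$ is the subvector indexed by $J$; $J^c=V\setminus J$. A set $J\subset V$ is stable if every strict superset $B\supsetneq J$ satisfies $F(B)>F(J)$. *)

theory Defs
  imports Complex_Main
begin

text \<open>Lovasz extension of a set-function G on a finite ground set W, evaluated at
  w (only the values w j for j in W matter; intended for nonnegative w).\<close>
definition lovasz :: "('a set \<Rightarrow> real) \<Rightarrow> 'a set \<Rightarrow> ('a \<Rightarrow> real) \<Rightarrow> real" where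
  "lovasz G W w =
    (let js = (SOME js. distinct js \<and> set js = W \<and> sorted_wrt (\<lambda>i j. w i \<ge> w j) js)
     in \<Sum>k<length js. w (js ! k) * (G (set (take (Suc k) js)) - G (set (take k js))))"

definition submodular_on :: "'a set \<Rightarrow> ('a set \<Rightarrow> real) \<Rightarrow> bool" where
  "submodular_on V F \<longleftrightarrow>
     (\<forall>A B. A \<subseteq> V \<longrightarrow> B \<subseteq> V \<longrightarrow> F (A \<union> B) + F (A \<inter> B) \<le> F A + F B)"

definition nondecreasing_on :: "'a set \<Rightarrow> ('a set \<Rightarrow> real) \<Rightarrow> bool" where
  "nondecreasing_on V F \<longleftrightarrow> (\<forall>A B. A \<subseteq> B \<longrightarrow> B \<subseteq> V \<longrightarrow> F A \<le> F B)"

definition stable_set :: "'a set \<Rightarrow> ('a set \<Rightarrow> real) \<Rightarrow> 'a set \<Rightarrow> bool" where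
  "stable_set V F J \<longleftrightarrow> (\<forall>B. J \<subset> B \<longrightarrow> B \<subseteq> V \<longrightarrow> F B > F J)"

text \<open>Vectors of R^S are represented as functions vanishing outside S.\<close>
definition vec_on :: "'a set \<Rightarrow> ('a \<Rightarrow> real) \<Rightarrow> bool" where
  "vec_on S v \<longleftrightarrow> (\<forall>i. i \<notin> S \<longrightarrow> v i = 0)"

definition is_norm_on :: "'a set \<Rightarrow> (('a \<Rightarrow> real) \<Rightarrow> real) \<Rightarrow> bool" where
  "is_norm_on S N \<longleftrightarrow>
     (\<forall>v. vec_on S v \<longrightarrow> N v \<ge> 0) \<and>
     (\<forall>v. vec_on S v \<longrightarrow> (N v = 0 \<longleftrightarrow> v = (\<lambda>_. 0))) \<and>
     (\<forall>v a. vec_on S v \<longrightarrow> N (\<lambda>i. a * v i) = \<bar>a\<bar> * N v) \<and>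
     (\<forall>u v. vec_on S u \<longrightarrow> vec_on S v \<longrightarrow> N (\<lambda>i. u i + v i) \<le> N u + N v)"

definition restr_fun :: "('a set \<Rightarrow> real) \<Rightarrow> 'a set \<Rightarrow> 'a set \<Rightarrow> real" where
  "restr_fun F J = (\<lambda>A. F A)"

definition contr_fun :: "('a set \<Rightarrow> real) \<Rightarrow> 'a set \<Rightarrow> 'a set \<Rightarrow> real" where
  "contr_fun F J = (\<lambda>A. F (A \<union> J) - F J)"

end

theory Submission
  imports Defs
begin

text \<open>
  Write the Lovasz extension \<open>f\<close> of \<open>G\<close> as a sum of marginal gains along a chain of sets.
  For every order of the ground set the vector \<open>s\<close> of marginal gains lies in the submodular
  polyhedron \<open>s(A) \<le> G A - G {}\<close>, and every such \<open>s\<close> satisfies \<open>\<Sum>\<^sub>i w\<^sub>i s\<^sub>i \<le> f w\<close> for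
  \<open>w \<ge> 0\<close>, with equality for the gains of an order that is decreasing in \<open>w\<close>.
  Listing \<open>J\<close> first and then \<open>V - J\<close>, each part sorted by \<open>|w|\<close>, gives a chain whose sum is
  the restricted plus the contracted extension: this proves (i), and (ii) since under its
  hypothesis that order is decreasing. The same two facts make the contracted extension of
  \<open>|v|\<close> absolutely homogeneous and subadditive, so it is a norm exactly when it is definite,
  i.e. when \<open>F (J \<union> {x}) > F J\<close> for every \<open>x \<notin> J\<close>; for nondecreasing \<open>F\<close> this is stability
  of \<open>J\<close>.
\<close>

fun lovasz_chain :: "('a set \<Rightarrow> real) \<Rightarrow> ('a \<Rightarrow> real) \<Rightarrow> 'a set \<Rightarrow> 'a list \<Rightarrow> real" where
  "lovasz_chain G w B [] = 0"
| "lovasz_chain G w B (x # xs) =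
     w x * (G (insert x B) - G B) + lovasz_chain G w (insert x B) xs"

fun marginal_gains :: "('a set \<Rightarrow> real) \<Rightarrow> 'a set \<Rightarrow> 'a list \<Rightarrow> 'a \<Rightarrow> real" where
  "marginal_gains G B [] = (\<lambda>_. 0)"
| "marginal_gains G B (x # xs) = (marginal_gains G (insert x B) xs)(x := G (insert x B) - G B)"

lemma submodular_onD:
  "submodular_on V F \<Longrightarrow> A \<subseteq> V \<Longrightarrow> B \<subseteq> V \<Longrightarrow> F (A \<union> B) + F (A \<inter> B) \<le> F A + F B"
  unfolding submodular_on_def by blast

lemma nondecreasing_onD: "nondecreasing_on V F \<Longrightarrow> A \<subseteq> B \<Longrightarrow> B \<subseteq> V \<Longrightarrow> F A \<le> F B"
  unfolding nondecreasing_on_def by blast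

lemma submodular_on_gain_antimono:
  assumes "submodular_on U G" "S \<subseteq> T" "T \<union> X \<subseteq> U" "T \<inter> X \<subseteq> S"
  shows "G (T \<union> X) - G T \<le> G (S \<union> X) - G S"
proof -
  have "G ((S \<union> X) \<union> T) + G ((S \<union> X) \<inter> T) \<le> G (S \<union> X) + G T"
    using assms(2,3) by (intro submodular_onD[OF assms(1)]) auto
  moreover have "(S \<union> X) \<union> T = T \<union> X" "(S \<union> X) \<inter> T = S" using assms(2,4) by auto
  ultimately show ?thesis by simp
qed

subsection \<open>Sums along a chain\<close>

lemma lovasz_chain_eq_sum:
  "(\<Sum>k<length js. w (js ! k) * (G (B \<union> set (take (Suc k) js)) - G (B \<union> set (take k js))))
     = lovasz_chain G w B js"
proof (induction js arbitrary: B)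
  case (Cons x xs)
  have "(\<Sum>k<length (x # xs). w ((x # xs) ! k) *
          (G (B \<union> set (take (Suc k) (x # xs))) - G (B \<union> set (take k (x # xs)))))
     = w x * (G (insert x B) - G B) + (\<Sum>k<length xs. w (xs ! k) *
          (G (insert x B \<union> set (take (Suc k) xs)) - G (insert x B \<union> set (take k xs))))"
    by (simp add: sum.lessThan_Suc_shift del: sum.lessThan_Suc)
  then show ?case using Cons[of "insert x B"] by simp
qed simp

lemma lovasz_chain_append:
  "lovasz_chain G w B (xs @ ys) = lovasz_chain G w B xs + lovasz_chain G w (B \<union> set xs) ys"
  by (induction xs arbitrary: B) auto

lemma lovasz_chain_cong:
  "\<forall>x\<in>set xs. w x = w' x \<Longrightarrow> lovasz_chain G w B xs = lovasz_chain G w' B xs"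
  by (induction xs arbitrary: B) auto

lemma lovasz_chain_const: "lovasz_chain G (\<lambda>_. c) B xs = c * (G (B \<union> set xs) - G B)"
  by (induction xs arbitrary: B) (simp_all add: algebra_simps)

lemma lovasz_chain_scale: "lovasz_chain G (\<lambda>i. c * w i) B xs = c * lovasz_chain G w B xs"
  by (induction xs arbitrary: B) (simp_all add: algebra_simps)

lemma lovasz_chain_diff_const:
  "lovasz_chain G (\<lambda>i. w i - c) B xs = lovasz_chain G w B xs - c * (G (B \<union> set xs) - G B)"
proof (induction xs arbitrary: B)
  case (Cons x xs)
  show ?case using Cons.IH[of "insert x B"] by (simp add: algebra_simps)
qed simp

lemma lovasz_chain_contr_fun: "lovasz_chain (contr_fun F J) w B xs = lovasz_chain F w (B \<union> J) xs"
  by (induction xs arbitrary: B) (simp_all add: contr_fun_def)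

lemma lovasz_chain_nonneg:
  assumes "nondecreasing_on U G" "B \<union> set xs \<subseteq> U" "\<forall>x\<in>set xs. w x \<ge> 0"
  shows "lovasz_chain G w B xs \<ge> 0"
  using assms(2,3)
proof (induction xs arbitrary: B)
  case (Cons x xs)
  have "insert x B \<subseteq> U" using Cons.prems(1) by simp
  then have "G B \<le> G (insert x B)" by (rule nondecreasing_onD[OF assms(1) subset_insertI])
  then have "w x * (G (insert x B) - G B) \<ge> 0" using Cons.prems(2) by simp
  moreover have "lovasz_chain G w (insert x B) xs \<ge> 0" using Cons.prems by (intro Cons.IH) auto
  ultimately show ?case by simp
qed simp

lemma lovasz_chain_eq_sum_marginal_gains:
  "distinct js \<Longrightarrow> lovasz_chain G w B js = (\<Sum>i\<in>set js. w i * marginal_gains G B js i)"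
proof (induction js arbitrary: B)
  case (Cons x xs)
  have "(\<Sum>i\<in>set xs. w i * marginal_gains G B (x # xs) i)
      = (\<Sum>i\<in>set xs. w i * marginal_gains G (insert x B) xs i)"
    using Cons.prems by (intro sum.cong) auto
  then show ?case using Cons by simp
qed simp

lemma marginal_gains_nonneg:
  assumes "nondecreasing_on U G" "B \<union> set xs \<subseteq> U"
  shows "marginal_gains G B xs i \<ge> 0"
  using assms(2)
proof (induction xs arbitrary: B)
  case (Cons x xs)
  have "insert x B \<subseteq> U" using Cons.prems by simp
  then have "G B \<le> G (insert x B)" by (rule nondecreasing_onD[OF assms(1) subset_insertI])
  moreover have "marginal_gains G (insert x B) xs i \<ge> 0" using Cons.prems by (intro Cons.IH) auto
  ultimately show ?case by simp
qed simp

lemma sum_marginal_gains_le: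
  assumes "distinct js" "B \<inter> set js = {}" "submodular_on (B \<union> set js) G" "A \<subseteq> set js"
  shows "(\<Sum>i\<in>A. marginal_gains G B js i) \<le> G (B \<union> A) - G B"
  using assms
proof (induction js arbitrary: B A)
  case (Cons x xs)
  have IH: "(\<Sum>i\<in>A'. marginal_gains G (insert x B) xs i) \<le> G (insert x B \<union> A') - G (insert x B)"
    if "A' \<subseteq> set xs" for A'
    using Cons.prems that by (intro Cons.IH) (auto simp: insert_commute)
  have gains: "(\<Sum>i\<in>A'. marginal_gains G B (x # xs) i) = (\<Sum>i\<in>A'. marginal_gains G (insert x B) xs i)"
    if "A' \<subseteq> set xs" for A'
    using Cons.prems(1) that by (intro sum.cong) auto
  show ?case
  proof (cases "x \<in> A")
    case True
    have A': "A - {x} \<subseteq> set xs" using Cons.prems(4) by auto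
    have "(\<Sum>i\<in>A. marginal_gains G B (x # xs) i)
        = (G (insert x B) - G B) + (\<Sum>i\<in>A - {x}. marginal_gains G (insert x B) xs i)"
      using True Cons.prems(4) gains[OF A'] by (simp add: sum.remove[OF finite_subset])
    also have "\<dots> \<le> (G (insert x B) - G B) + (G (insert x B \<union> (A - {x})) - G (insert x B))"
      using IH[OF A'] by linarith
    also have "insert x B \<union> (A - {x}) = B \<union> A" using True by auto
    finally show ?thesis by simp
  next
    case False
    have A': "A \<subseteq> set xs" using Cons.prems(4) False by auto
    have "(\<Sum>i\<in>A. marginal_gains G B (x # xs) i) \<le> G (insert x B \<union> A) - G (insert x B)"
      using gains[OF A'] IH[OF A'] by simp
    also have "\<dots> \<le> G (B \<union> A) - G B"
      using Cons.prems(2,4) False by (intro submodular_on_gain_antimono[OF Cons.prems(3)]) auto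
    finally show ?thesis .
  qed
qed simp

text \<open>Peel off the smallest weight \<open>c\<close>, which multiplies the polyhedron constraint on the whole
  set.\<close>

lemma sum_le_lovasz_chain:
  assumes "sorted_wrt (\<lambda>i j. w i \<ge> w j) js" "\<forall>i\<in>set js. w i \<ge> 0" "distinct js"
    "\<forall>A \<subseteq> set js. (\<Sum>i\<in>A. s i) \<le> G (B \<union> A) - G B"
  shows "(\<Sum>i\<in>set js. w i * s i) \<le> lovasz_chain G w B js"
  using assms
proof (induction js arbitrary: w rule: rev_induct)
  case (snoc y ys)
  define c where "c = w y"
  have y: "y \<notin> set ys" using snoc.prems(3) by simp
  have c: "c \<ge> 0" "\<forall>i\<in>set ys. w i \<ge> c"
    using snoc.prems(1,2) unfolding c_def by (simp_all add: sorted_wrt_append)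
  have IH: "(\<Sum>i\<in>set ys. (w i - c) * s i) \<le> lovasz_chain G (\<lambda>i. w i - c) B ys"
    using snoc.prems c(2) by (intro snoc.IH) (auto simp: sorted_wrt_append)
  have "c * (\<Sum>i\<in>set (ys @ [y]). s i) \<le> c * (G (B \<union> set (ys @ [y])) - G B)"
    using snoc.prems(4) c(1) by (intro mult_left_mono) auto
  moreover have "(\<Sum>i\<in>set (ys @ [y]). w i * s i)
      = (\<Sum>i\<in>set ys. (w i - c) * s i) + c * (\<Sum>i\<in>set (ys @ [y]). s i)"
    using y by (simp add: c_def sum_distrib_left sum.distrib[symmetric] algebra_simps)
  ultimately have "(\<Sum>i\<in>set (ys @ [y]). w i * s i)
      \<le> lovasz_chain G w B ys - c * (G (B \<union> set ys) - G B) + c * (G (B \<union> set (ys @ [y])) - G B)"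
    using IH lovasz_chain_diff_const[of G w c B ys] by linarith
  also have "\<dots> = lovasz_chain G w B (ys @ [y])"
    by (simp add: lovasz_chain_append c_def algebra_simps insert_commute)
  finally show ?case .
qed simp

subsection \<open>The Lovasz extension\<close>

lemma sorted_enumeration_exists:
  assumes "finite W"
  shows "\<exists>js. distinct js \<and> set js = W \<and> sorted_wrt (\<lambda>i j. (w :: _ \<Rightarrow> real) i \<ge> w j) js"
proof -
  obtain xs where xs: "set xs = W" "distinct xs" using finite_distinct_list[OF assms] by blast
  define js where "js = sort_key (\<lambda>i. - w i) xs"
  have "sorted_wrt (\<lambda>i j. - w i \<le> - w j) js"
    unfolding js_def using sorted_sort_key[of "\<lambda>i. - w i" xs] by (simp only: sorted_map)
  then have "sorted_wrt (\<lambda>i j. w i \<ge> w j) js" by (rule sorted_wrt_mono_rel[rotated]) simp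
  moreover have "distinct js" "set js = W" using xs unfolding js_def by simp_all
  ultimately show ?thesis by blast
qed

lemma lovasz_sorted_chain:
  assumes "finite W"
  obtains js where "distinct js" "set js = W" "sorted_wrt (\<lambda>i j. w i \<ge> w j) js"
    "lovasz G W w = lovasz_chain G w {} js"
proof -
  let ?P = "\<lambda>js. distinct js \<and> set js = W \<and> sorted_wrt (\<lambda>i j. w i \<ge> w j) js"
  have "?P (SOME js. ?P js)" using someI_ex[OF sorted_enumeration_exists[OF assms]] .
  moreover have "lovasz G W w = lovasz_chain G w {} (SOME js. ?P js)"
    unfolding lovasz_def Let_def using lovasz_chain_eq_sum[of w _ G "{}"] by simp
  ultimately show ?thesis using that by blast
qed

lemma sum_le_lovasz:
  assumes "finite W" "\<forall>i\<in>W. w i \<ge> 0" "\<forall>A \<subseteq> W. (\<Sum>i\<in>A. s i) \<le> G A - G {}"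
  shows "(\<Sum>i\<in>W. w i * s i) \<le> lovasz G W w"
proof -
  obtain js where "distinct js" "set js = W" "sorted_wrt (\<lambda>i j. w i \<ge> w j) js"
    "lovasz G W w = lovasz_chain G w {} js"
    using lovasz_sorted_chain[OF assms(1)] by metis
  then show ?thesis using sum_le_lovasz_chain[of w js s G "{}"] assms(2,3) by simp
qed

lemma lovasz_chain_le_lovasz:
  assumes "finite W" "distinct js" "set js = W" "\<forall>i\<in>W. w i \<ge> 0" "submodular_on W G"
  shows "lovasz_chain G w {} js \<le> lovasz G W w"
proof -
  have "lovasz_chain G w {} js = (\<Sum>i\<in>W. w i * marginal_gains G {} js i)"
    using lovasz_chain_eq_sum_marginal_gains[OF assms(2)] assms(3) by simp
  also have "\<dots> \<le> lovasz G W w"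
    using assms sum_marginal_gains_le[of js "{}" G] by (intro sum_le_lovasz) auto
  finally show ?thesis .
qed

lemma lovasz_eq_lovasz_chain:
  assumes "finite W" "distinct js" "set js = W" "sorted_wrt (\<lambda>i j. w i \<ge> w j) js"
    "\<forall>i\<in>W. w i \<ge> 0" "submodular_on W G"
  shows "lovasz G W w = lovasz_chain G w {} js"
proof -
  obtain js0 where js0: "distinct js0" "set js0 = W" "lovasz G W w = lovasz_chain G w {} js0"
    using lovasz_sorted_chain[OF assms(1)] by metis
  have "lovasz_chain G w {} js0 = (\<Sum>i\<in>set js. w i * marginal_gains G {} js0 i)"
    using lovasz_chain_eq_sum_marginal_gains[OF js0(1)] js0(2) assms(3) by simp
  also have "\<dots> \<le> lovasz_chain G w {} js"
    using assms js0 sum_marginal_gains_le[of js0 "{}" G]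
    by (intro sum_le_lovasz_chain) auto
  finally show ?thesis using lovasz_chain_le_lovasz[OF assms(1-3,5,6)] js0(3) by linarith
qed

lemma lovasz_nonneg:
  assumes "finite W" "nondecreasing_on W G" "\<forall>i\<in>W. w i \<ge> 0"
  shows "lovasz G W w \<ge> 0"
proof -
  obtain js where "set js = W" "lovasz G W w = lovasz_chain G w {} js"
    using lovasz_sorted_chain[OF assms(1)] by metis
  then show ?thesis using lovasz_chain_nonneg[OF assms(2), of "{}" js w] assms(3) by simp
qed

lemma lovasz_zero:
  assumes "finite W"
  shows "lovasz G W (\<lambda>_. 0) = 0"
proof -
  obtain js where "lovasz G W (\<lambda>_. 0) = lovasz_chain G (\<lambda>_. 0) {} js"
    using lovasz_sorted_chain[OF assms] by metis
  then show ?thesis by (simp add: lovasz_chain_const)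
qed

lemma lovasz_pos:
  assumes "finite W" "nondecreasing_on W G" "\<forall>x\<in>W. G {} < G {x}"
    "\<forall>i\<in>W. w i \<ge> 0" "i \<in> W" "w i > 0"
  shows "lovasz G W w > 0"
proof -
  obtain js where js: "set js = W" "sorted_wrt (\<lambda>i j. w i \<ge> w j) js"
    "lovasz G W w = lovasz_chain G w {} js"
    using lovasz_sorted_chain[OF assms(1)] by metis
  then obtain x xs where x: "js = x # xs" using assms(5) by (cases js) auto
  have "w x \<ge> w i" using js(1,2) assms(5) x by (cases "i = x") auto
  moreover have "x \<in> W" using js(1) x by auto
  then have "G {} < G {x}" using assms(3) by blast
  ultimately have "w x * (G {x} - G {}) > 0" using assms(6) by simp
  moreover have "lovasz_chain G w {x} xs \<ge> 0"
    using js(1) x assms(4) by (intro lovasz_chain_nonneg[OF assms(2)]) auto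
  ultimately show ?thesis using js(3) x by simp
qed

lemma lovasz_scale:
  assumes "finite W" "submodular_on W G" "\<forall>i\<in>W. w i \<ge> 0" "c \<ge> 0"
  shows "lovasz G W (\<lambda>i. c * w i) = c * lovasz G W w"
proof -
  obtain js where js: "distinct js" "set js = W" "sorted_wrt (\<lambda>i j. w i \<ge> w j) js"
    using sorted_enumeration_exists[OF assms(1)] by metis
  have "sorted_wrt (\<lambda>i j. c * w i \<ge> c * w j) js"
    using js(3) by (rule sorted_wrt_mono_rel[rotated]) (simp add: assms(4) mult_left_mono)
  then show ?thesis
    using js assms lovasz_eq_lovasz_chain[of W js]
    by (simp add: lovasz_chain_scale zero_le_mult_iff)
qed

lemma lovasz_le_add:
  assumes "finite W" "submodular_on W G" "nondecreasing_on W G"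
    "\<forall>i\<in>W. 0 \<le> u i \<and> 0 \<le> v i \<and> 0 \<le> w i \<and> w i \<le> u i + v i"
  shows "lovasz G W w \<le> lovasz G W u + lovasz G W v"
proof -
  obtain js where js: "distinct js" "set js = W" "lovasz G W w = lovasz_chain G w {} js"
    using lovasz_sorted_chain[OF assms(1)] by metis
  let ?s = "marginal_gains G {} js"
  have s: "\<forall>A \<subseteq> W. (\<Sum>i\<in>A. ?s i) \<le> G A - G {}"
    using sum_marginal_gains_le[of js "{}" G] js assms(2) by simp
  have "lovasz G W w = (\<Sum>i\<in>W. w i * ?s i)"
    using js lovasz_chain_eq_sum_marginal_gains[OF js(1)] by simp
  also have "\<dots> \<le> (\<Sum>i\<in>W. u i * ?s i) + (\<Sum>i\<in>W. v i * ?s i)"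
    unfolding sum.distrib[symmetric] distrib_right[symmetric]
    using assms(4) marginal_gains_nonneg[OF assms(3), of "{}" js] js(2)
    by (intro sum_mono mult_right_mono) auto
  also have "\<dots> \<le> lovasz G W u + lovasz G W v"
    using assms(1,4) s by (intro add_mono sum_le_lovasz) auto
  finally show ?thesis .
qed

lemma lovasz_indicator_singleton:
  assumes "finite W" "submodular_on W G" "x \<in> W"
  shows "lovasz G W (\<lambda>i. if i = x then 1 else 0) = G {x} - G {}"
proof -
  obtain xs where xs: "distinct xs" "set xs = W - {x}"
    using finite_distinct_list[of "W - {x}"] assms(1) by blast
  let ?w = "\<lambda>i. if i = x then 1 else 0 :: real"
  have zero: "\<forall>y\<in>set xs. ?w y = 0" using xs(2) by auto
  have "sorted_wrt (\<lambda>i j. ?w i \<ge> ?w j) xs"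
    by (rule sorted_wrt_mono_rel[OF _ sorted_wrt_true]) (use zero in simp)
  then have "sorted_wrt (\<lambda>i j. ?w i \<ge> ?w j) (x # xs)" using zero by simp
  then have "lovasz G W ?w = lovasz_chain G ?w {} (x # xs)"
    using assms xs by (intro lovasz_eq_lovasz_chain) auto
  also have "\<dots> = G {x} - G {} + lovasz_chain G ?w {x} xs" by simp
  also have "lovasz_chain G ?w {x} xs = lovasz_chain G (\<lambda>_. 0) {x} xs"
    using zero by (intro lovasz_chain_cong) simp
  finally show ?thesis by (simp add: lovasz_chain_const)
qed

theorem is_norm_on_lovasz_abs_iff:
  assumes "finite W" "submodular_on W G" "nondecreasing_on W G"
  shows "is_norm_on W (\<lambda>v. lovasz G W (\<lambda>i. \<bar>v i\<bar>)) \<longleftrightarrow> (\<forall>x\<in>W. G {} < G {x})"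
proof
  assume norm: "is_norm_on W (\<lambda>v. lovasz G W (\<lambda>i. \<bar>v i\<bar>))"
  show "\<forall>x\<in>W. G {} < G {x}"
  proof
    fix x assume x: "x \<in> W"
    let ?v = "\<lambda>i. if i = x then 1 else 0 :: real"
    have "vec_on W ?v" using x unfolding vec_on_def by simp
    moreover have "?v \<noteq> (\<lambda>_. 0)" by (metis one_neq_zero)
    ultimately have "lovasz G W (\<lambda>i. \<bar>?v i\<bar>) \<noteq> 0" using norm unfolding is_norm_on_def by blast
    moreover have "(\<lambda>i. \<bar>?v i\<bar>) = ?v" by auto
    moreover have "G {} \<le> G {x}" using assms(3) x by (simp add: nondecreasing_onD)
    ultimately show "G {} < G {x}" using lovasz_indicator_singleton[OF assms(1,2) x] by simp
  qed
next
  assume pos: "\<forall>x\<in>W. G {} < G {x}"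
  have definite: "lovasz G W (\<lambda>i. \<bar>v i\<bar>) = 0 \<longleftrightarrow> v = (\<lambda>_. 0)" if "vec_on W v" for v
  proof
    assume "lovasz G W (\<lambda>i. \<bar>v i\<bar>) = 0"
    then have "v i = 0" if "i \<in> W" for i
      using lovasz_pos[OF assms(1,3) pos, of "\<lambda>i. \<bar>v i\<bar>" i] that by force
    then show "v = (\<lambda>_. 0)" using \<open>vec_on W v\<close> unfolding vec_on_def by blast
  qed (simp add: lovasz_zero[OF assms(1)])
  have "lovasz G W (\<lambda>i. \<bar>a * v i\<bar>) = \<bar>a\<bar> * lovasz G W (\<lambda>i. \<bar>v i\<bar>)" for a v
    using lovasz_scale[OF assms(1,2), of "\<lambda>i. \<bar>v i\<bar>" "\<bar>a\<bar>"] by (simp add: abs_mult)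
  moreover have "lovasz G W (\<lambda>i. \<bar>u i + v i\<bar>)
      \<le> lovasz G W (\<lambda>i. \<bar>u i\<bar>) + lovasz G W (\<lambda>i. \<bar>v i\<bar>)" for u v
    using assms by (intro lovasz_le_add) (auto intro: abs_triangle_ineq)
  ultimately show "is_norm_on W (\<lambda>v. lovasz G W (\<lambda>i. \<bar>v i\<bar>))"
    unfolding is_norm_on_def using definite lovasz_nonneg[OF assms(1,3)] by simp
qed

subsection \<open>Restriction and contraction\<close>

lemma submodular_on_contr_fun:
  assumes "submodular_on V F" "J \<subseteq> V"
  shows "submodular_on (V - J) (contr_fun F J)"
  unfolding submodular_on_def
proof (intro allI impI)
  fix A B assume "A \<subseteq> V - J" "B \<subseteq> V - J"
  then have "A \<union> J \<subseteq> V" "B \<union> J \<subseteq> V" using assms(2) by auto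
  then have "F ((A \<union> J) \<union> (B \<union> J)) + F ((A \<union> J) \<inter> (B \<union> J)) \<le> F (A \<union> J) + F (B \<union> J)"
    by (rule submodular_onD[OF assms(1)])
  moreover have "(A \<union> J) \<union> (B \<union> J) = (A \<union> B) \<union> J" "(A \<union> J) \<inter> (B \<union> J) = (A \<inter> B) \<union> J" by auto
  ultimately show "contr_fun F J (A \<union> B) + contr_fun F J (A \<inter> B)
      \<le> contr_fun F J A + contr_fun F J B"
    unfolding contr_fun_def by simp
qed

lemma nondecreasing_on_contr_fun:
  assumes "nondecreasing_on V F" "J \<subseteq> V"
  shows "nondecreasing_on (V - J) (contr_fun F J)"
  unfolding nondecreasing_on_def
proof (intro allI impI)
  fix A B assume "A \<subseteq> B" "B \<subseteq> V - J"
  then have "A \<union> J \<subseteq> B \<union> J" "B \<union> J \<subseteq> V" using assms(2) by auto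
  then have "F (A \<union> J) \<le> F (B \<union> J)" using assms(1) by (simp add: nondecreasing_onD)
  then show "contr_fun F J A \<le> contr_fun F J B" unfolding contr_fun_def by simp
qed

lemma stable_set_iff_insert:
  assumes "nondecreasing_on V F" "J \<subseteq> V"
  shows "stable_set V F J \<longleftrightarrow> (\<forall>x\<in>V - J. F J < F (insert x J))"
proof
  assume "stable_set V F J"
  then show "\<forall>x\<in>V - J. F J < F (insert x J)" using assms(2) unfolding stable_set_def by blast
next
  assume gain: "\<forall>x\<in>V - J. F J < F (insert x J)"
  show "stable_set V F J" unfolding stable_set_def
  proof (intro allI impI)
    fix B assume "J \<subset> B" "B \<subseteq> V"
    then obtain x where x: "x \<in> B" "x \<notin> J" by blast
    then have "F J < F (insert x J)" using gain \<open>B \<subseteq> V\<close> by blast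
    also have "F (insert x J) \<le> F B"
      using x \<open>J \<subset> B\<close> \<open>B \<subseteq> V\<close> by (intro nondecreasing_onD[OF assms(1)]) auto
    finally show "F J < F B" .
  qed
qed

lemma lovasz_plus_lovasz_contr_fun:
  assumes "finite V" "J \<subseteq> V"
  obtains js ks where "distinct js" "set js = J" "sorted_wrt (\<lambda>i j. a i \<ge> a j) js"
    "distinct ks" "set ks = V - J" "sorted_wrt (\<lambda>i j. a i \<ge> a j) ks"
    "lovasz F J a + lovasz (contr_fun F J) (V - J) a = lovasz_chain F a {} (js @ ks)"
proof -
  obtain js where js: "distinct js" "set js = J" "sorted_wrt (\<lambda>i j. a i \<ge> a j) js"
    "lovasz F J a = lovasz_chain F a {} js"
    using lovasz_sorted_chain finite_subset[OF assms(2,1)] by metis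
  obtain ks where ks: "distinct ks" "set ks = V - J" "sorted_wrt (\<lambda>i j. a i \<ge> a j) ks"
    "lovasz (contr_fun F J) (V - J) a = lovasz_chain (contr_fun F J) a {} ks"
    using lovasz_sorted_chain assms(1) by (metis finite_Diff)
  show ?thesis
    using that[OF js(1-3) ks(1-3)] js(2,4) ks(4)
    by (simp add: lovasz_chain_append lovasz_chain_contr_fun)
qed

lemma lovasz_plus_lovasz_contr_fun_le:
  assumes "finite V" "J \<subseteq> V" "submodular_on V F" "\<forall>i\<in>V. a i \<ge> 0"
  shows "lovasz F J a + lovasz (contr_fun F J) (V - J) a \<le> lovasz F V a"
proof -
  obtain js ks where "distinct js" "set js = J" "distinct ks" "set ks = V - J"
    "lovasz F J a + lovasz (contr_fun F J) (V - J) a = lovasz_chain F a {} (js @ ks)"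
    using lovasz_plus_lovasz_contr_fun[OF assms(1,2)] by metis
  then show ?thesis using assms lovasz_chain_le_lovasz[of V "js @ ks" a F] by auto
qed

lemma lovasz_plus_lovasz_contr_fun_eq:
  assumes "finite V" "J \<subseteq> V" "submodular_on V F" "\<forall>i\<in>V. a i \<ge> 0"
    "\<forall>i\<in>J. \<forall>j\<in>V - J. a i \<ge> a j"
  shows "lovasz F J a + lovasz (contr_fun F J) (V - J) a = lovasz F V a"
proof -
  obtain js ks where jk: "distinct js" "set js = J" "sorted_wrt (\<lambda>i j. a i \<ge> a j) js"
    "distinct ks" "set ks = V - J" "sorted_wrt (\<lambda>i j. a i \<ge> a j) ks"
    "lovasz F J a + lovasz (contr_fun F J) (V - J) a = lovasz_chain F a {} (js @ ks)"
    using lovasz_plus_lovasz_contr_fun[OF assms(1,2)] by metis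
  have "sorted_wrt (\<lambda>i j. a i \<ge> a j) (js @ ks)"
    using jk(2,3,5,6) assms(5) by (simp add: sorted_wrt_append)
  moreover have "distinct (js @ ks)" "set (js @ ks) = V" using jk(1,2,4,5) assms(2) by auto
  ultimately have "lovasz F V a = lovasz_chain F a {} (js @ ks)"
    using assms(1,3,4) by (intro lovasz_eq_lovasz_chain)
  then show ?thesis using jk(7) by simp
qed

theorem proposition4:
  fixes p :: nat and F :: "nat set \<Rightarrow> real" and J :: "nat set"
  defines "V \<equiv> {1..p}"
  assumes sub: "submodular_on V F"
    and mono: "nondecreasing_on V F"
    and empty: "F {} = 0"
    and single: "\<forall>k\<in>V. F {k} > 0"
    and JV: "J \<subseteq> V"
  shows
    "(\<forall>w :: nat \<Rightarrow> real.
        lovasz F V (\<lambda>i. \<bar>w i\<bar>)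
          \<ge> lovasz (restr_fun F J) J (\<lambda>i. \<bar>w i\<bar>)
            + lovasz (contr_fun F J) (V - J) (\<lambda>i. \<bar>w i\<bar>))
   \<and> (\<forall>w :: nat \<Rightarrow> real.
        (\<forall>i\<in>J. \<forall>j\<in>V - J. \<bar>w i\<bar> \<ge> \<bar>w j\<bar>) \<longrightarrow>
        lovasz F V (\<lambda>i. \<bar>w i\<bar>)
          = lovasz (restr_fun F J) J (\<lambda>i. \<bar>w i\<bar>)
            + lovasz (contr_fun F J) (V - J) (\<lambda>i. \<bar>w i\<bar>))
   \<and> (is_norm_on (V - J) (\<lambda>v. lovasz (contr_fun F J) (V - J) (\<lambda>i. \<bar>v i\<bar>))
        \<longleftrightarrow> stable_set V F J)"
proof -
  have finV: "finite V" unfolding V_def by simp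
  have restr: "restr_fun F J = F" by (simp add: restr_fun_def)
  have le: "lovasz F J (\<lambda>i. \<bar>w i\<bar>) + lovasz (contr_fun F J) (V - J) (\<lambda>i. \<bar>w i\<bar>)
      \<le> lovasz F V (\<lambda>i. \<bar>w i\<bar>)" for w :: "nat \<Rightarrow> real"
    by (rule lovasz_plus_lovasz_contr_fun_le[OF finV JV sub]) simp
  have eq: "lovasz F V (\<lambda>i. \<bar>w i\<bar>)
      = lovasz F J (\<lambda>i. \<bar>w i\<bar>) + lovasz (contr_fun F J) (V - J) (\<lambda>i. \<bar>w i\<bar>)"
    if "\<forall>i\<in>J. \<forall>j\<in>V - J. \<bar>w i\<bar> \<ge> \<bar>w j\<bar>" for w :: "nat \<Rightarrow> real"
    by (rule lovasz_plus_lovasz_contr_fun_eq[OF finV JV sub, symmetric]) (use that in simp_all)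
  have "finite (V - J)" using finV by simp
  then have "is_norm_on (V - J) (\<lambda>v. lovasz (contr_fun F J) (V - J) (\<lambda>i. \<bar>v i\<bar>))
      \<longleftrightarrow> (\<forall>x\<in>V - J. contr_fun F J {} < contr_fun F J {x})"
    by (rule is_norm_on_lovasz_abs_iff[OF _ submodular_on_contr_fun[OF sub JV]
          nondecreasing_on_contr_fun[OF mono JV]])
  also have "\<dots> \<longleftrightarrow> (\<forall>x\<in>V - J. F J < F (insert x J))" by (simp add: contr_fun_def)
  also have "\<dots> \<longleftrightarrow> stable_set V F J" by (rule stable_set_iff_insert[OF mono JV, symmetric])
  finally have norm: "is_norm_on (V - J) (\<lambda>v. lovasz (contr_fun F J) (V - J) (\<lambda>i. \<bar>v i\<bar>))
      \<longleftrightarrow> stable_set V F J" .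
  show ?thesis unfolding restr by (intro conjI allI impI le norm) (erule eq)
qed

end
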